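(* Let $J,J'\subset\mathbb S$ with $\delta(J)=J$ and $\delta(J')=J'$. Let $y\in\tilde W$ and $\alpha\in\Sigma$, with reflection $s_\alpha\in W$. If there exist $w,w'\in W$ such that $w^{-1}y\delta(s_\alpha)\delta(w)\in\tilde W_J$ and $w'^{-1}y\delta(w')\in\tilde W_{J'}$, then $w^{-1}(\alpha)\in\Sigma_J$ or $w'^{-1}(\alpha)\in\Sigma_{J'}$.
   Context: Let $\tilde W=X_*(T)_\Gamma\rtimes W$ be the Iwahori–Weyl group of a quasi-split connected semisimple group $G$ over a local field $F$ (finite extension of $\mathbb Q_p$ or $\mathbb F_q((\epsilon))$) split over a tamely ramified extension, relative to a maximal $L$-split torus $S$ defined over $F$ with centralizer $T$, where $L$ is the completion of the maximal unramified extension of $F$ and $\Gamma=\mathrm{Gal}(\bar L/L)$. $\delta$ is the automorphism of $\tilde W$ and $W$ induced by the Frobenius of $L/F$. $\Sigma$ is the reduced root system on $X_*(T)_\Gamma\otimes\mathbb R$ whose affine roots are $v\mapsto\langle a,v\rangle+k$, $a\in\Sigma$, $k\in\mathbb Z$, with $W=W(\Sigma)$; $\mathbb S$ a set of simple roots (simple reflections) of $\Sigma$; for $J\subset\mathbb S$, $\Sigma_J$ is the set of roots spanned by $J$, $W_J$ the parabolic subgroup, $\tilde W_J=X_*(T)_\Gamma\rtimes W_J$. *)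

theory Defs
  imports "HOL-Analysis.Analysis"
begin

text \<open>Reflection in the hyperplane orthogonal to a (with respect to a W- and
Frobenius-invariant inner product on V = X_*(T)_Gamma tensor R).\<close>
definition refl :: "'v::real_inner \<Rightarrow> 'v \<Rightarrow> 'v" where
  "refl a v = v - (2 * (v \<bullet> a) / (a \<bullet> a)) *\<^sub>R a"

text \<open>Reduced (crystallographic) root system spanning V (G semisimple).\<close>
definition reduced_root_system :: "'v::euclidean_space set \<Rightarrow> bool" where
  "reduced_root_system R \<longleftrightarrow>
     finite R \<and> 0 \<notin> R \<and> span R = UNIV \<and>
     (\<forall>a\<in>R. \<forall>b\<in>R. refl a b \<in> R \<and> 2 * (b \<bullet> a) / (a \<bullet> a) \<in> \<int>) \<and>
     (\<forall>a\<in>R. \<forall>c::real. c *\<^sub>R a \<in> R \<longrightarrow> c = 1 \<or> c = -1)"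

definition simple_roots :: "'v::euclidean_space set \<Rightarrow> 'v set \<Rightarrow> bool" where
  "simple_roots R S \<longleftrightarrow> S \<subseteq> R \<and> independent S \<and>
     (\<forall>b\<in>R. \<exists>c. (\<forall>a\<in>S. c a \<in> \<int>) \<and> ((\<forall>a\<in>S. c a \<ge> 0) \<or> (\<forall>a\<in>S. c a \<le> 0)) \<and>
        b = (\<Sum>a\<in>S. c a *\<^sub>R a))"

text \<open>The group generated by the reflections s_a, a in A (W = weyl_gen Sigma,
W_J = weyl_gen J).\<close>
inductive_set weyl_gen :: "'v::real_inner set \<Rightarrow> ('v \<Rightarrow> 'v) set" for A where
  id: "id \<in> weyl_gen A"
| step: "a \<in> A \<Longrightarrow> w \<in> weyl_gen A \<Longrightarrow> refl a \<circ> w \<in> weyl_gen A"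

definition roots_J :: "'v::real_vector set \<Rightarrow> 'v set \<Rightarrow> 'v set" where
  "roots_J R J = R \<inter> span J"

definition deltaW :: "('v \<Rightarrow> 'v) \<Rightarrow> ('v \<Rightarrow> 'v) \<Rightarrow> ('v \<Rightarrow> 'v)" where
  "deltaW d w = d \<circ> w \<circ> inv d"

text \<open>Iwahori--Weyl group X \<rtimes> W as pairs (lambda, w).\<close>
definition iw_mult :: "(('v \<Rightarrow> 'v) \<Rightarrow> 'x \<Rightarrow> 'x) \<Rightarrow> ('x::ab_group_add \<times> ('v \<Rightarrow> 'v))
     \<Rightarrow> ('x \<times> ('v \<Rightarrow> 'v)) \<Rightarrow> ('x \<times> ('v \<Rightarrow> 'v))" where
  "iw_mult act p q = (fst p + act (snd p) (fst q), snd p \<circ> snd q)"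

definition iw_group :: "('v \<Rightarrow> 'v) set \<Rightarrow> ('x \<times> ('v \<Rightarrow> 'v)) set" where
  "iw_group W = {p. snd p \<in> W}"

definition deltaIW :: "('x \<Rightarrow> 'x) \<Rightarrow> ('v \<Rightarrow> 'v) \<Rightarrow> ('x \<times> ('v \<Rightarrow> 'v)) \<Rightarrow> ('x \<times> ('v \<Rightarrow> 'v))" where
  "deltaIW dX d p = (dX (fst p), deltaW d (snd p))"

definition iw_data :: "'v::euclidean_space set \<Rightarrow> (('v \<Rightarrow> 'v) \<Rightarrow> 'x::ab_group_add \<Rightarrow> 'x)
     \<Rightarrow> ('x \<Rightarrow> 'x) \<Rightarrow> ('v \<Rightarrow> 'v) \<Rightarrow> bool" where
  "iw_data R act dX d \<longleftrightarrow>
     act id = id \<and>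
     (\<forall>v\<in>weyl_gen R. \<forall>w\<in>weyl_gen R. act (v \<circ> w) = act v \<circ> act w) \<and>
     (\<forall>w\<in>weyl_gen R. \<forall>x y. act w (x + y) = act w x + act w y) \<and>
     bij dX \<and> (\<forall>x y. dX (x + y) = dX x + dX y) \<and>
     (\<forall>w\<in>weyl_gen R. \<forall>x. dX (act w x) = act (deltaW d w) (dX x))"

end

theory Submission
  imports Defs
begin

text \<open>Pick a vector p fixed by delta whose orthogonal roots are exactly Sigma_J: it pairs to 0
with the simple roots in J and to 1 with the others. Take q likewise for J'. Then W_J fixes p and
W_J' fixes q, so, u being the finite part of y, the two hypotheses say that the orthogonal map
u \<circ> delta sends s_alpha(w p) to w p and w' q to w' q. Comparing inner products gives
<s_alpha(w p), w' q> = <w p, w' q>, i.e. <w p, alpha> <alpha, w' q> = 0, and the vanishing factor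
puts w^-1 alpha into Sigma_J or w'^-1 alpha into Sigma_J'.\<close>

lemma refl_eq_self_if_orthogonal: "v \<bullet> a = 0 \<Longrightarrow> refl a v = v"
  by (simp add: refl_def)

lemma weyl_gen_fixes_orthogonal:
  "w \<in> weyl_gen A \<Longrightarrow> (\<forall>a\<in>A. v \<bullet> a = 0) \<Longrightarrow> w v = v"
  by (induction rule: weyl_gen.induct) (auto simp: refl_eq_self_if_orthogonal)

lemma orthogonal_transformation_refl:
  fixes a :: "'v::euclidean_space"
  assumes "a \<noteq> 0"
  shows "orthogonal_transformation (refl a)"
proof -
  have "linear (refl a)"
    unfolding refl_def by (auto simp: linear_iff inner_add_left algebra_simps add_divide_distrib)
  moreover have "refl a v \<bullet> refl a u = v \<bullet> u" for v u
    using assms by (simp add: refl_def inner_diff_left inner_diff_right field_simps inner_commute)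
  ultimately show ?thesis by (simp add: orthogonal_transformation_def)
qed

lemma orthogonal_transformation_weyl_gen:
  fixes A :: "'v::euclidean_space set"
  shows "w \<in> weyl_gen A \<Longrightarrow> 0 \<notin> A \<Longrightarrow> orthogonal_transformation w"
  by (induction rule: weyl_gen.induct)
     (auto simp: id_def intro: orthogonal_transformation_compose orthogonal_transformation_refl)

lemma refl_inner_eq_inner_iff:
  fixes a :: "'v::real_inner"
  assumes "a \<noteq> 0"
  shows "refl a x \<bullet> y = x \<bullet> y \<longleftrightarrow> x \<bullet> a = 0 \<or> a \<bullet> y = 0"
  using assms by (auto simp: refl_def inner_diff_left field_simps)

lemma weyl_gen_image_roots:
  fixes R :: "'v::euclidean_space set"
  assumes "finite R" "0 \<notin> R" "\<forall>a\<in>R. \<forall>b\<in>R. refl a b \<in> R" "w \<in> weyl_gen R"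
  shows "w ` R = R"
proof (rule endo_inj_surj[OF \<open>finite R\<close>])
  show "w ` R \<subseteq> R"
    using assms(4) by (induction rule: weyl_gen.induct) (use assms(3) in auto)
  show "inj_on w R"
    using orthogonal_transformation_inj[OF orthogonal_transformation_weyl_gen[OF assms(4,2)]]
    by (meson inj_on_subset subset_UNIV)
qed

lemma inv_weyl_gen_root:
  assumes "reduced_root_system R" "w \<in> weyl_gen R" "\<alpha> \<in> R"
  shows "inv w \<alpha> \<in> R"
proof -
  have "w ` R = R"
    using assms(1,2) by (intro weyl_gen_image_roots) (auto simp: reduced_root_system_def)
  then obtain \<beta> where "\<beta> \<in> R" "\<alpha> = w \<beta>"
    using assms(3) by blast
  moreover have "inj w"
    using assms(1,2) orthogonal_transformation_inj orthogonal_transformation_weyl_gen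
    by (auto simp: reduced_root_system_def)
  ultimately show ?thesis by (simp add: inv_f_f)
qed

definition regular_for :: "'v::euclidean_space set \<Rightarrow> 'v set \<Rightarrow> 'v \<Rightarrow> bool" where
  "regular_for R J p \<longleftrightarrow> (\<forall>a\<in>J. p \<bullet> a = 0) \<and> (\<forall>\<beta>\<in>R. p \<bullet> \<beta> = 0 \<longrightarrow> \<beta> \<in> span J)"

lemma exists_inner_eq_on_independent:
  fixes S :: "'v::euclidean_space set"
  assumes "independent S"
  shows "\<exists>p. \<forall>a\<in>S. p \<bullet> a = g a"
proof -
  obtain f :: "'v \<Rightarrow> real" where "linear f" "\<forall>a\<in>S. f a = g a"
    using linear_independent_extend[OF assms] by blast
  then have "\<forall>a\<in>S. adjoint f 1 \<bullet> a = g a"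
    by (simp add: inner_commute adjoint_works)
  then show ?thesis by blast
qed

lemma span_simple_roots:
  assumes "simple_roots R S" "span R = UNIV"
  shows "span S = UNIV"
proof -
  have "R \<subseteq> span S"
  proof
    fix b assume "b \<in> R"
    then obtain c where "b = (\<Sum>a\<in>S. c a *\<^sub>R a)"
      using assms(1) by (auto simp: simple_roots_def)
    then show "b \<in> span S" by (simp add: span_base span_scale span_sum)
  qed
  then show ?thesis
    using assms(2) by (metis span_minimal subspace_span top.extremum_uniqueI)
qed

lemma orthogonal_transformation_fixes_if_inner_invariant:
  fixes S :: "'v::euclidean_space set"
  assumes "orthogonal_transformation d" "span S = UNIV" "S \<subseteq> d ` S"
    and "\<forall>b\<in>S. p \<bullet> d b = p \<bullet> b"
  shows "d p = p"
proof -
  have "(d p - p) \<bullet> a = 0" if "a \<in> S" for a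
  proof -
    obtain b where "b \<in> S" "a = d b" using \<open>a \<in> S\<close> assms(3) by blast
    then have "d p \<bullet> a = p \<bullet> a"
      using assms(1,4) by (simp add: orthogonal_transformation_def)
    then show ?thesis by (simp add: inner_diff_left)
  qed
  then have "orthogonal (d p - p) x" for x
    using orthogonal_to_span[of x S "d p - p"] assms(2) by (auto simp: orthogonal_def)
  then show ?thesis by (metis orthogonal_self right_minus_eq)
qed

lemma root_in_span_if_inner_eq_0:
  assumes "simple_roots R S" "finite S" "J \<subseteq> S"
    and "\<forall>a\<in>S - J. p \<bullet> a = 1" "\<forall>a\<in>J. p \<bullet> a = 0"
    and "\<beta> \<in> R" "p \<bullet> \<beta> = 0"
  shows "\<beta> \<in> span J"
proof -
  obtain c where sign: "(\<forall>a\<in>S. c a \<ge> 0) \<or> (\<forall>a\<in>S. - c a \<ge> 0)"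
    and \<beta>: "\<beta> = (\<Sum>a\<in>S. c a *\<^sub>R a)"
    using assms(1,6) unfolding simple_roots_def by (metis neg_0_le_iff_le)
  have "p \<bullet> \<beta> = (\<Sum>a\<in>S - J. c a * (p \<bullet> a)) + (\<Sum>a\<in>J. c a * (p \<bullet> a))"
    using assms(2,3) by (simp add: \<beta> sum.subset_diff inner_add_right inner_sum_right)
  also have "\<dots> = (\<Sum>a\<in>S - J. c a)"
    using assms(4,5) by simp
  finally have "(\<Sum>a\<in>S - J. c a) = 0" "(\<Sum>a\<in>S - J. - c a) = 0"
    using assms(7) by (simp_all add: sum_negf)
  from sign have "\<forall>a\<in>S - J. c a = 0"
  proof
    assume "\<forall>a\<in>S. c a \<ge> 0"
    then show ?thesis
      using \<open>(\<Sum>a\<in>S - J. c a) = 0\<close> sum_nonneg_eq_0_iff[of "S - J" c] assms(2) by simp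
  next
    assume "\<forall>a\<in>S. - c a \<ge> 0"
    then show ?thesis
      using \<open>(\<Sum>a\<in>S - J. - c a) = 0\<close> sum_nonneg_eq_0_iff[of "S - J" "\<lambda>a. - c a"] assms(2)
      by simp
  qed
  then have "c a *\<^sub>R a \<in> span J" if "a \<in> S" for a
    using that by (cases "a \<in> J") (auto simp: span_base span_scale span_zero)
  then show ?thesis by (simp add: \<beta> span_sum)
qed

lemma exists_fixed_regular_vector:
  fixes R S J :: "'v::euclidean_space set"
  assumes "reduced_root_system R" "simple_roots R S"
    and od: "orthogonal_transformation d" and dS: "d ` S = S" and dJ: "d ` J = J" and "J \<subseteq> S"
  shows "\<exists>p. d p = p \<and> regular_for R J p"
proof -
  have "finite S"
    using assms(1,2) by (auto simp: reduced_root_system_def simple_roots_def intro: finite_subset)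
  obtain p where p: "\<forall>a\<in>S. p \<bullet> a = (if a \<in> J then 0 else 1)"
    using exists_inner_eq_on_independent[of S "\<lambda>a. if a \<in> J then 0 else 1"] assms(2)
    by (auto simp: simple_roots_def)
  have "d b \<in> J \<longleftrightarrow> b \<in> J" for b
    using dJ orthogonal_transformation_inj[OF od] by (auto dest: injD)
  moreover have "\<forall>b\<in>S. d b \<in> S"
    using dS by blast
  ultimately have "\<forall>b\<in>S. p \<bullet> d b = p \<bullet> b"
    using p by simp
  moreover have "span S = UNIV"
    using assms(1,2) span_simple_roots by (auto simp: reduced_root_system_def)
  ultimately have "d p = p"
    using orthogonal_transformation_fixes_if_inner_invariant od dS by blast
  moreover have "\<forall>a\<in>S - J. p \<bullet> a = 1" "\<forall>a\<in>J. p \<bullet> a = 0"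
    using p \<open>J \<subseteq> S\<close> by auto
  then have "regular_for R J p"
    unfolding regular_for_def
    using root_in_span_if_inner_eq_0[OF assms(2) \<open>finite S\<close> \<open>J \<subseteq> S\<close>] by blast
  ultimately show ?thesis by blast
qed

lemma inv_root_in_roots_J:
  assumes "reduced_root_system R" "w \<in> weyl_gen R" "\<alpha> \<in> R"
    and "regular_for R J p" "w p \<bullet> \<alpha> = 0"
  shows "inv w \<alpha> \<in> roots_J R J"
proof -
  have "0 \<notin> R" using assms(1) by (simp add: reduced_root_system_def)
  then have w: "orthogonal_transformation w"
    using orthogonal_transformation_weyl_gen assms(2) by blast
  have "p \<bullet> inv w \<alpha> = w p \<bullet> w (inv w \<alpha>)"
    using w by (simp add: orthogonal_transformation_def)
  also have "\<dots> = 0"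
    using assms(5) orthogonal_transformation_surj[OF w] by (simp add: surj_f_inv_f)
  finally show ?thesis
    using assms(4) inv_weyl_gen_root[OF assms(1-3)] by (simp add: regular_for_def roots_J_def)
qed

lemma deltaW_comp: "inj d \<Longrightarrow> deltaW d (v \<circ> w) = deltaW d v \<circ> deltaW d w"
  by (simp add: deltaW_def fun_eq_iff inv_f_f)

lemma regular_fixed_point_eq:
  assumes "inj d" "d p = p" "surj w" "regular_for R J p" "inv w \<circ> u \<circ> deltaW d v \<in> weyl_gen J"
  shows "u (d (v p)) = w p"
proof -
  have "inv d p = p"
    using assms(1,2) by (metis inv_f_f)
  moreover have "(inv w \<circ> u \<circ> deltaW d v) p = p"
    using weyl_gen_fixes_orthogonal[OF assms(5)] assms(4) by (simp add: regular_for_def)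
  ultimately have "inv w (u (d (v p))) = p"
    by (simp add: deltaW_def)
  then show ?thesis
    using assms(3) by (metis surj_f_inv_f)
qed

theorem lemma4p4p4:
  fixes R S J J' :: "'v::euclidean_space set"
    and d :: "'v \<Rightarrow> 'v"
    and act :: "('v \<Rightarrow> 'v) \<Rightarrow> 'x::ab_group_add \<Rightarrow> 'x"
    and dX :: "'x \<Rightarrow> 'x"
    and y :: "'x \<times> ('v \<Rightarrow> 'v)"
    and \<alpha> :: 'v
    and w w' :: "'v \<Rightarrow> 'v"
  assumes "reduced_root_system R"
    and "simple_roots R S"
    and "orthogonal_transformation d" and "d ` R = R" and "d ` S = S"
    and "iw_data R act dX d"
    and "J \<subseteq> S" and "J' \<subseteq> S" and "d ` J = J" and "d ` J' = J'"
    and "y \<in> iw_group (weyl_gen R)"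
    and "\<alpha> \<in> R"
    and "w \<in> weyl_gen R" and "w' \<in> weyl_gen R"
    and "iw_mult act (iw_mult act (iw_mult act (0, inv w) y) (deltaIW dX d (0, refl \<alpha>)))
               (deltaIW dX d (0, w)) \<in> iw_group (weyl_gen J)"
    and "iw_mult act (iw_mult act (0, inv w') y) (deltaIW dX d (0, w')) \<in> iw_group (weyl_gen J')"
  shows "inv w \<alpha> \<in> roots_J R J \<or> inv w' \<alpha> \<in> roots_J R J'"
proof -
  obtain p q where p: "d p = p" "regular_for R J p" and q: "d q = q" "regular_for R J' q"
    using exists_fixed_regular_vector assms(1-3,5,7-10) by metis
  have "0 \<notin> R" "\<alpha> \<noteq> 0" "inj d"
    using assms(1,3,12) orthogonal_transformation_inj by (auto simp: reduced_root_system_def)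
  then have u: "orthogonal_transformation (snd y \<circ> d)"
    using assms(3,11) orthogonal_transformation_weyl_gen
    by (auto simp: iw_group_def intro: orthogonal_transformation_compose)
  have ws: "surj w" "surj w'"
    using \<open>0 \<notin> R\<close> assms(13,14) orthogonal_transformation_weyl_gen orthogonal_transformation_surj
    by blast+
  have "inv w \<circ> snd y \<circ> deltaW d (refl \<alpha> \<circ> w) \<in> weyl_gen J"
    "inv w' \<circ> snd y \<circ> deltaW d w' \<in> weyl_gen J'"
    using assms(15,16) \<open>inj d\<close>
    by (simp_all add: iw_mult_def deltaIW_def iw_group_def deltaW_comp comp_assoc)
  then have fixed: "(snd y \<circ> d) (refl \<alpha> (w p)) = w p" "(snd y \<circ> d) (w' q) = w' q"
    using regular_fixed_point_eq \<open>inj d\<close> p q ws by (metis comp_apply)+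
  have "refl \<alpha> (w p) \<bullet> w' q = (snd y \<circ> d) (refl \<alpha> (w p)) \<bullet> (snd y \<circ> d) (w' q)"
    using u by (simp add: orthogonal_transformation_def)
  also have "\<dots> = w p \<bullet> w' q"
    by (simp only: fixed)
  finally have "w p \<bullet> \<alpha> = 0 \<or> w' q \<bullet> \<alpha> = 0"
    using refl_inner_eq_inner_iff[OF \<open>\<alpha> \<noteq> 0\<close>] by (simp add: inner_commute)
  then show ?thesis
    using inv_root_in_roots_J[OF assms(1,13,12) p(2)] inv_root_in_roots_J[OF assms(1,14,12) q(2)]
    by blast
qed

end
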